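(* Let $C=(1,c_2,c_3,c_4,c_5,c_6)=(1,c_2,2c_2,c_4,c_2+c_4,2c_4)$ be a system that is canonical and whose subsystem $(1,c_2,c_3,c_4,c_5)$ is noncanonical, and let $\ell=\lceil c_5/c_3\rceil$. Then $c_4\ge 3c_2-1$, $c_4\ne 3c_2$, $\mathrm{grd}_C(\ell c_3)\le\ell$, and $\mathrm{grd}_C(\ell c_3)=\ell c_3-c_5+1-\lfloor(\ell c_3-c_5)/c_2\rfloor(c_2-1)$.
   Context: A system is a tuple $C=(c_1,\dots,c_n)$ of integers with $1=c_1<c_2<\dots<c_n$; for $k\le n$, $(c_1,\dots,c_k)$ is a subsystem. For a positive integer $v$, $\mathrm{opt}_C(v)$ is the minimum of $\sum_i x_i$ over $x\in\mathbb{Z}_{\ge0}^n$ with $\sum_i c_ix_i=v$. The greedy representation of $v$ is produced by: for $i=n$ down to $1$, while $c_i\le$ remaining value, take a coin $c_i$. $\mathrm{grd}_C(v)$ is its number of coins. A positive integer $w$ is a counterexample if $\mathrm{opt}_C(w)<\mathrm{grd}_C(w)$; $C$ is canonical if it has none, noncanonical otherwise. *)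

theory Defs
  imports Complex_Main
begin

text \<open>A system is a list c = [c_1,...,c_n] (0-indexed in Isabelle) with c_1 = 1 and
  strictly increasing entries.\<close>
definition is_system :: "nat list \<Rightarrow> bool" where
  "is_system c \<longleftrightarrow> c \<noteq> [] \<and> c ! 0 = 1 \<and> sorted_wrt (<) c"

definition opt :: "nat list \<Rightarrow> nat \<Rightarrow> nat" where
  "opt c v = (LEAST k. \<exists>x :: nat \<Rightarrow> nat.
      (\<Sum>i<length c. c ! i * x i) = v \<and> (\<Sum>i<length c. x i) = k)"

text \<open>Greedy: process coins from largest to smallest; for coin d, while d \<le> remaining
  value take a coin d, i.e. take (remaining div d) coins and continue with remaining mod d.\<close>
fun grd_desc :: "nat list \<Rightarrow> nat \<Rightarrow> nat" where
  "grd_desc [] v = 0"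
| "grd_desc (d # ds) v = v div d + grd_desc ds (v mod d)"

definition grd :: "nat list \<Rightarrow> nat \<Rightarrow> nat" where
  "grd c v = grd_desc (rev c) v"

definition counterexample :: "nat list \<Rightarrow> nat \<Rightarrow> bool" where
  "counterexample c w \<longleftrightarrow> 0 < w \<and> opt c w < grd c w"

definition canonical :: "nat list \<Rightarrow> bool" where
  "canonical c \<longleftrightarrow> (\<forall>w. \<not> counterexample c w)"

end

theory Submission
  imports Defs
begin

text \<open>Write \<open>a = c\<^sub>2\<close> and \<open>b = c\<^sub>4\<close>, so that \<open>C = (1, a, 2a, b, a + b, 2b)\<close>.
  For \<open>a + b \<le> v < 3a + b\<close> and \<open>v < 2b\<close> the greedy algorithm takes one coin \<open>a + b\<close> and
  then pays the rest \<open>R = v - (a + b) < 2a\<close> with coins \<open>a\<close> and \<open>1\<close>, so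
  \<open>grd(v) = 1 + \<lfloor>R/a\<rfloor> + R mod a\<close>. At \<open>v = 4a\<close> this gives \<open>grd(4a) = 1 + 3a - b\<close>, while
  two coins \<open>2a\<close> suffice, so canonicity forces \<open>b \<ge> 3a - 1\<close>. If \<open>b = 3a\<close>, the subsystem
  \<open>(1, a, 2a, 3a, 4a)\<close> is canonical, being a scaled copy of \<open>(1, 2, 3, 4)\<close> with the
  unit coin absorbing remainders. Finally \<open>v = \<ell>\<cdot>2a\<close> lies in \<open>[a + b, 3a + b)\<close> and below
  \<open>2b\<close>, and \<open>\<ell>\<close> coins \<open>2a\<close> pay it, which yields the bound \<open>grd(v) \<le> \<ell>\<close> and the formula.\<close>

lemma opt_le_sum:
  assumes "(\<Sum>i<length c. c ! i * x i) = v"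
  shows "opt c v \<le> (\<Sum>i<length c. x i)"
  unfolding opt_def by (rule Least_le) (use assms in blast)

lemma opt_le_multiple_coin:
  assumes "i < length c"
  shows "opt c (k * c ! i) \<le> k"
proof -
  let ?x = "\<lambda>j. if j = i then k else 0"
  have "opt c (k * c ! i) \<le> (\<Sum>j<length c. ?x j)"
    by (rule opt_le_sum) (use assms in \<open>simp add: if_distrib[of "\<lambda>t. c ! _ * t"] cong: if_cong\<close>)
  then show ?thesis using assms by simp
qed

lemma opt_attained:
  assumes "c \<noteq> []" "c ! 0 = 1"
  shows "\<exists>x. (\<Sum>i<length c. c ! i * x i) = v \<and> (\<Sum>i<length c. x i) = opt c v"
proof -
  have "\<exists>k x. (\<Sum>i<length c. c ! i * x i) = v \<and> (\<Sum>i<length c. x i) = k"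
  proof (intro exI conjI)
    let ?x = "\<lambda>i::nat. if i = 0 then v else 0"
    show "(\<Sum>i<length c. c ! i * ?x i) = v"
      using assms by (simp add: if_distrib[of "\<lambda>t. c ! _ * t"] cong: if_cong)
  qed (rule refl)
  then show ?thesis unfolding opt_def by (rule LeastI_ex[where P = "\<lambda>k. \<exists>x. _ x k"])
qed

lemma canonical_grd_le_opt: "canonical c \<Longrightarrow> 0 < w \<Longrightarrow> grd c w \<le> opt c w"
  unfolding canonical_def counterexample_def by (meson not_le)

lemma grd_desc_unit_multiples_below:
  assumes "v < 4 * a"
  shows "grd_desc [3*a, 2*a, a, 1] v = (v div a + 3) div 4 + v mod a"
proof -
  define m where "m = v div a"
  define r where "r = v mod a"
  have v: "v = a * m + r" unfolding m_def r_def by simp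
  have r: "r < a" using assms unfolding r_def by simp
  have "m < 4" using assms unfolding m_def by (simp add: div_less_iff_less_mult mult.commute)
  then consider (m0) "m = 0" | (m1) "m = 1" | (m2) "m = 2" | (m3) "m = 3" by linarith
  then show ?thesis
  proof cases
    case m2
    have "(a*2 + r) div (2*a) = 1" by (rule div_nat_eqI) (use r in simp_all)
    moreover have "(a*2 + r) mod (2*a) = r" by (rule mod_nat_eqI) (use r in simp_all)
    ultimately show ?thesis using r v m2 by simp
  next
    case m3
    have "(a*3 + r) div (3*a) = 1" by (rule div_nat_eqI) (use r in simp_all)
    moreover have "(a*3 + r) mod (3*a) = r" by (rule mod_nat_eqI) (use r in simp_all)
    ultimately show ?thesis using r v m3 by simp
  qed (use r v in simp_all)
qed

lemma div_four_eq_round_up_split: "(n::nat) div 4 + (n mod 4 + 3) div 4 = (n + 3) div 4"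
  by presburger

lemma grd_unit_multiples:
  assumes "0 < a"
  shows "grd [1, a, 2*a, 3*a, 4*a] w = (w div a + 3) div 4 + w mod a"
proof -
  let ?r = "w mod (4*a)"
  have r: "?r = a * (w div a mod 4) + w mod a"
    by (metis mod_mult2_eq mult.commute)
  have "grd [1, a, 2*a, 3*a, 4*a] w = w div (4*a) + grd_desc [3*a, 2*a, a, 1] ?r"
    by (simp add: grd_def)
  also have "\<dots> = w div (4*a) + (?r div a + 3) div 4 + ?r mod a"
    using assms grd_desc_unit_multiples_below[of ?r a] by simp
  also have "\<dots> = w div a div 4 + (w div a mod 4 + 3) div 4 + w mod a"
    using assms r by (simp add: div_mult2_eq mult.commute)
  also have "\<dots> = (w div a + 3) div 4 + w mod a"
    using div_four_eq_round_up_split[of "w div a"] by simp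
  finally show ?thesis .
qed

lemma canonical_unit_multiples:
  assumes "0 < a"
  shows "canonical [1, a, 2*a, 3*a, 4*a]"
  unfolding canonical_def counterexample_def
proof (intro allI notI)
  let ?c = "[1, a, 2*a, 3*a, 4*a]"
  fix w assume "0 < w \<and> opt ?c w < grd ?c w"
  then have lt: "opt ?c w < grd ?c w" by blast
  obtain x where x: "(\<Sum>i<length ?c. ?c ! i * x i) = w" "(\<Sum>i<length ?c. x i) = opt ?c w"
    using opt_attained[of ?c w] by auto
  define y where "y = x 1 + 2 * x 2 + 3 * x 3 + 4 * x 4"
  define d where "d = x 0 div a"
  have w: "w = x 0 + a * y"
    using x(1) by (simp add: numeral_eq_Suc algebra_simps y_def)
  have opt: "opt ?c w = x 0 + x 1 + x 2 + x 3 + x 4"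
    using x(2) by (simp add: numeral_eq_Suc algebra_simps)
  have "d \<le> a * d" using assms by simp
  moreover have "x 0 = a * d + x 0 mod a" unfolding d_def by simp
  ultimately have x0: "d + x 0 mod a \<le> x 0" by linarith
  have "w div a = d + y" "w mod a = x 0 mod a"
    using assms unfolding w d_def by simp_all
  then have "grd ?c w = (d + y + 3) div 4 + x 0 mod a"
    using grd_unit_multiples[OF assms, of w] by simp
  also have "\<dots> \<le> d + (y + 3) div 4 + x 0 mod a"
    by simp
  also have "(y + 3) div 4 \<le> x 1 + x 2 + x 3 + x 4"
    unfolding y_def by simp
  finally show False using lt opt x0 by simp
qed

lemma six_coin_system_shape:
  assumes "is_system c" "length c = 6"
    and "c ! 2 = 2 * c ! 1" "c ! 4 = c ! 1 + c ! 3" "c ! 5 = 2 * c ! 3"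
  shows "c = [1, c ! 1, 2 * c ! 1, c ! 3, c ! 1 + c ! 3, 2 * c ! 3]"
    and "2 \<le> c ! 1" "2 * c ! 1 < c ! 3"
proof -
  have sorted: "sorted_wrt (<) c" and c0: "c ! 0 = 1"
    using assms(1) unfolding is_system_def by auto
  show "c = [1, c ! 1, 2 * c ! 1, c ! 3, c ! 1 + c ! 3, 2 * c ! 3]"
  proof (rule nth_equalityI)
    fix i assume "i < length c"
    then consider "i = 0" | "i = 1" | "i = 2" | "i = 3" | "i = 4" | "i = 5"
      using assms(2) by linarith
    then show "c ! i = [1, c ! 1, 2 * c ! 1, c ! 3, c ! 1 + c ! 3, 2 * c ! 3] ! i"
      by cases (simp_all add: assms(3-5) c0)
  qed (simp add: assms(2))
  have "c ! 0 < c ! 1" "c ! 2 < c ! 3"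
    using sorted assms(2) by (simp_all add: sorted_wrt_iff_nth_less)
  then show "2 \<le> c ! 1" "2 * c ! 1 < c ! 3"
    using assms(3) c0 by simp_all
qed

lemma grd_six_coins_one_large_coin:
  assumes "2*a < b" "a + b \<le> v" "v < 2*b" "v - (a + b) < 2*a"
  shows "grd [1, a, 2*a, b, a + b, 2*b] v = 1 + (v - (a + b)) div a + (v - (a + b)) mod a"
proof -
  let ?R = "v - (a + b)"
  have "v div (a + b) = 1" by (rule div_nat_eqI) (use assms in simp_all)
  moreover have "v mod (a + b) = ?R" by (rule mod_nat_eqI) (use assms in simp_all)
  ultimately show ?thesis using assms by (simp add: grd_def)
qed

lemma canonical_six_coins_lower_bound:
  assumes "canonical [1, a, 2*a, b, a + b, 2*b]" "2*a < b"
  shows "3*a - 1 \<le> b"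
proof (rule ccontr)
  let ?c = "[1, a, 2*a, b, a + b, 2*b]"
  assume "\<not> 3*a - 1 \<le> b"
  then have small: "b + 2 \<le> 3*a" by simp
  have "3*a - b < a" using assms(2) small by linarith
  then have "grd ?c (4*a) = 1 + (3*a - b)"
    using grd_six_coins_one_large_coin[of a b "4*a"] assms(2) small
    by (simp add: div_less mod_less)
  then have "2 < grd ?c (4*a)" using small by simp
  moreover have "opt ?c (2 * ?c ! 2) \<le> 2"
    by (rule opt_le_multiple_coin) simp
  ultimately show False
    using canonical_grd_le_opt[OF assms(1), of "4*a"] small by simp
qed

lemma nat_ceiling_divide_mult_bounds:
  assumes "0 < d"
  shows "n \<le> nat \<lceil>real n / real d\<rceil> * d" and "nat \<lceil>real n / real d\<rceil> * d < n + d"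
proof -
  have "0 \<le> real n / real d" by simp
  then have "0 \<le> \<lceil>real n / real d\<rceil>" by linarith
  then have l: "real (nat \<lceil>real n / real d\<rceil>) = of_int \<lceil>real n / real d\<rceil>" by simp
  have "real n \<le> real (nat \<lceil>real n / real d\<rceil> * d)"
    using ceiling_divide_upper[of "real d" "real n"] assms l by simp
  then show "n \<le> nat \<lceil>real n / real d\<rceil> * d" by linarith
  have "real (nat \<lceil>real n / real d\<rceil> * d) < real (n + d)"
    using ceiling_divide_lower[of "real d" "real n"] assms l by (simp add: algebra_simps)
  then show "nat \<lceil>real n / real d\<rceil> * d < n + d" by linarith
qed

lemma multiple_in_window_lt_double:
  fixes a b l :: nat
  assumes "2 \<le> a" "3*a - 1 \<le> b" "b \<noteq> 3*a"
    and "a + b \<le> l * (2*a)" "l * (2*a) < a + b + 2*a"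
  shows "l * (2*a) < 2*b"
proof (cases "b = 3*a - 1")
  case True
  \<comment> \<open>then the window \<open>[a + b, 3a + b)\<close> contains only the multiple \<open>4a\<close> of \<open>2a\<close>\<close>
  have "1 * (2*a) < l * (2*a)" and "l * (2*a) < 3 * (2*a)"
    using assms(1,4,5) True by linarith+
  then have "l = 2" by (simp only: mult_less_cancel2) linarith
  then show ?thesis using True assms(1) by simp
next
  case False
  then show ?thesis using assms(2,3,5) by simp
qed

lemma div_mod_count_eq_floor:
  assumes "n \<le> v"
  shows "int (1 + (v - n) div a + (v - n) mod a)
    = int v - int n + 1 - \<lfloor>(real v - real n) / real a\<rfloor> * (int a - 1)"
proof -
  let ?q = "(v - n) div a" and ?r = "(v - n) mod a"
  have "real v - real n = real (v - n)" using assms by simp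
  then have fl: "\<lfloor>(real v - real n) / real a\<rfloor> = int ?q"
    by (simp only: floor_divide_of_nat_eq)
  have "int v - int n = int (?q * a + ?r)"
    using assms by (simp only: div_mult_mod_eq of_nat_diff)
  then show ?thesis unfolding fl of_nat_add of_nat_mult by (simp add: algebra_simps)
qed

theorem lemma10:
  fixes c :: "nat list" and l :: nat
  assumes "is_system c"
    and "length c = 6"
    and "c ! 2 = 2 * c ! 1"
    and "c ! 4 = c ! 1 + c ! 3"
    and "c ! 5 = 2 * c ! 3"
    and "canonical c"
    and "\<not> canonical (take 5 c)"
    and "l = nat \<lceil>real (c ! 4) / real (c ! 2)\<rceil>"
  shows "c ! 3 \<ge> 3 * c ! 1 - 1
    \<and> c ! 3 \<noteq> 3 * c ! 1
    \<and> grd c (l * c ! 2) \<le> l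
    \<and> int (grd c (l * c ! 2)) =
           int (l * c ! 2) - int (c ! 4) + 1
           - \<lfloor>(real (l * c ! 2) - real (c ! 4)) / real (c ! 1)\<rfloor> * (int (c ! 1) - 1)"
proof -
  define a b where "a = c ! 1" and "b = c ! 3"
  have c: "c = [1, a, 2*a, b, a + b, 2*b]" and a: "2 \<le> a" and ab: "2*a < b"
    using six_coin_system_shape[OF assms(1-5)] unfolding a_def b_def by auto
  have entries: "c ! 1 = a" "c ! 2 = 2*a" "c ! 3 = b" "c ! 4 = a + b"
    by (simp_all add: c)
  have lower: "3*a - 1 \<le> b"
    using canonical_six_coins_lower_bound assms(6) ab unfolding c by blast
  have ne: "b \<noteq> 3*a"
    using assms(7) canonical_unit_multiples[of a] a unfolding c by (auto simp: numeral_eq_Suc)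
  have window: "a + b \<le> l * (2*a)" "l * (2*a) < a + b + 2*a"
    using nat_ceiling_divide_mult_bounds[of "2*a" "a + b"] a assms(8) unfolding entries by simp_all
  have below: "l * (2*a) < 2*b"
    using multiple_in_window_lt_double[OF a lower ne window] .
  have grd: "grd c (l * (2*a)) = 1 + (l * (2*a) - (a + b)) div a + (l * (2*a) - (a + b)) mod a"
    unfolding c using grd_six_coins_one_large_coin ab window below by simp
  have "grd c (l * c ! 2) \<le> opt c (l * c ! 2)"
    unfolding entries by (rule canonical_grd_le_opt[OF assms(6)]) (use window ab in linarith)
  also have "\<dots> \<le> l"
    using opt_le_multiple_coin assms(2) by simp
  finally show ?thesis
    using lower ne grd div_mod_count_eq_floor[OF window(1)] unfolding entries by simp
qed

end
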